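(* Let $P\subset\mathbb R^d$ be a rational $d$-polytope, and let $\Delta_P$ be the decomposition of $\mathbb R^d$ into open cells determined by the arrangement $\mathcal A_P$ (defined in the context). Let $\bm u,\bm v\in\mathbb R^d$. If there is $\bm w\in\mathbb Z^d$ such that $\bm u$ and $\bm v+\bm w$ lie in the same open cell of $\Delta_P$ (i.e. $[\bm u]$ and $[\bm v]$ lie in the same cell of $\Delta_P/\mathbb Z^d$), then $\mathrm{TL}_{P,\bm u}(t)=\mathrm{TL}_{P,\bm v}(t)$ for all $t\in\mathbb Z_{\ge 0}$.
   Context: For $\bm a\in\mathbb R^d$, $b\in\mathbb R$, let $H_{\bm a,b}=\{\bm x:(\bm a,\bm x)=b\}$ and $H^{\ge}_{\bm a,b}=\{\bm x:(\bm a,\bm x)\ge b\}$, where $(\cdot,\cdot)$ is the standard inner product. A rational $d$-polytope $P\subset\mathbb R^d$ has a unique irredundant presentation $P=H^{\ge}_{\bm a_1,b_1}\cap\cdots\cap H^{\ge}_{\bm a_m,b_m}$ with each $(\bm a_i,b_i)\in\mathbb Z^{d+1}$ primitive (gcd of entries is 1); $N(P)=\{\bm a_1,\dots,\bm a_m\}$. The arrangement is $\mathcal A_P=\{H_{\bm a_i,k}: 1\le i\le m,\ k\in\mathbb Z\}$. The open cells of $\Delta_P$ are the nonempty sets $A_1\cap\cdots\cap A_m$ where each $A_i$ is either $H_{\bm a_i,k}$ or $\{\bm x: k<(\bm a_i,\bm x)<k+1\}$ for some $k\in\mathbb Z$. $[\bm v]$ denotes the image of $\bm v$ in $\mathbb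 R^d/\mathbb Z^d$; $\Delta_P/\mathbb Z^d$ is the induced cell decomposition of the torus. For a convex set $X\subset\mathbb R^d$ and $\bm v\in\mathbb R^d$, the translated lattice points enumerator is $\mathrm{TL}_{X,\bm v}(t)=\#((tX+\bm v)\cap\mathbb Z^d)$ for $t\in\mathbb Z_{\ge0}$. *)

theory Defs
  imports "HOL-Analysis.Analysis"
begin

text \<open>Points of R^d are modelled as real^'n (d = CARD('n)); integer vectors as int^'n.\<close>

definition ivec :: "int^'n \<Rightarrow> real^'n" where
  "ivec z = (\<chi> i. of_int (z $ i))"

definition ipair :: "int^'n \<Rightarrow> real^'n \<Rightarrow> real" where
  "ipair a x = ivec a \<bullet> x"

definition hyp :: "int^'n \<Rightarrow> int \<Rightarrow> (real^'n) set" where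
  "hyp a b = {x. ipair a x = of_int b}"

definition halfsp :: "int^'n \<Rightarrow> int \<Rightarrow> (real^'n) set" where
  "halfsp a b = {x. ipair a x \<ge> of_int b}"

definition primitive :: "int^'n \<Rightarrow> int \<Rightarrow> bool" where
  "primitive a b \<longleftrightarrow> Gcd (insert b (range (\<lambda>i. a $ i))) = 1"

definition rational_polytope :: "(real^'n) set \<Rightarrow> bool" where
  "rational_polytope P \<longleftrightarrow>
     (\<exists>V. finite V \<and> (\<forall>v\<in>V. \<forall>i. v $ i \<in> \<rat>) \<and> P = convex hull V)
     \<and> aff_dim P = int CARD('n)"

text \<open>N(P): the normals a_i of the unique irredundant primitive presentation,
  i.e. the primitive integer inward normals of the facets of P.\<close>
definition normals :: "(real^'n) set \<Rightarrow> (int^'n) set" where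
  "normals P = {a. \<exists>b. primitive a b \<and> P \<subseteq> halfsp a b \<and> (P \<inter> hyp a b) facet_of P}"

definition pieces :: "int^'n \<Rightarrow> (real^'n) set set" where
  "pieces a = {hyp a k | k. True} \<union> {{x. of_int k < ipair a x \<and> ipair a x < of_int k + 1} | k. True}"

definition open_cells :: "(real^'n) set \<Rightarrow> (real^'n) set set" where
  "open_cells P = {C. C \<noteq> {} \<and> (\<exists>A. (\<forall>a\<in>normals P. A a \<in> pieces a) \<and> C = (\<Inter>a\<in>normals P. A a))}"

definition TL :: "(real^'n) set \<Rightarrow> real^'n \<Rightarrow> nat \<Rightarrow> nat" where
  "TL X v t = card {z :: int^'n. ivec z \<in> (\<lambda>x. real t *\<^sub>R x + v) ` X}"

end

theory Submission
  imports Defs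
begin

text \<open>
  A rational polytope is the intersection of its facet halfspaces \<open>(\<alpha>, x) \<ge> \<beta>\<close> with
  primitive integral \<open>(\<alpha>, \<beta>)\<close>; integrality of the facet normals comes from the cofactor
  vector of a rational basis of each facet direction. For \<open>t > 0\<close> a lattice point \<open>z\<close> lies in
  \<open>tP + u\<close> iff \<open>(\<alpha>, z) - t\<beta> \<ge> (\<alpha>, u)\<close> for every facet, and since the left side is an
  integer this depends on \<open>u\<close> only through the ceilings \<open>\<lceil>(\<alpha>, u)\<rceil>\<close>, which are constant on
  the cells of \<open>\<Delta>\<^sub>P\<close>. For \<open>t = 0\<close> the dilate is the single point \<open>u\<close>; if it is a lattice point,
  then every \<open>(\<alpha>, u)\<close> is an integer, so a point of the same cell has the same values
  \<open>(\<alpha>, \<cdot>)\<close>, and as the facet normals of a bounded polytope span, it equals \<open>u\<close>.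
  Finally, translating by the lattice vector \<open>w\<close> does not change the lattice point count.
\<close>

lemma common_denominator:
  fixes S :: "real set"
  assumes "finite S" "S \<subseteq> \<rat>"
  shows "\<exists>N::int. N > 0 \<and> (\<forall>q\<in>S. of_int N * q \<in> \<int>)"
  using assms
proof (induction S rule: finite_induct)
  case empty
  show ?case by (intro exI[of _ 1]) simp
next
  case (insert q S)
  then obtain N :: int where N: "N > 0" "\<forall>r\<in>S. of_int N * r \<in> \<int>" by auto
  from insert.prems obtain a b :: int where q: "q = of_int a / of_int b" "b > 0"
    by (auto elim!: Rats_cases')
  have "of_int (N * b) * r \<in> \<int>" if "r \<in> insert q S" for r
  proof (cases "r = q")
    case True
    then show ?thesis using q by simp
  next
    case False
    then have "of_int (N * b) * r = of_int b * (of_int N * r)" by simp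
    then show ?thesis using False that N(2) by (metis Ints_mult Ints_of_int insertE)
  qed
  then show ?case using N(1) q(2) by (intro exI[of _ "N * b"]) simp
qed

lemma primitive_part_exists:
  fixes \<alpha>0 :: "int^'n" and \<beta>0 :: int
  assumes "\<alpha>0 \<noteq> 0"
  obtains \<alpha> \<beta> and g :: int where "g > 0" "\<alpha>0 = g *s \<alpha>" "\<beta>0 = g * \<beta>" "primitive \<alpha> \<beta>"
proof -
  define g where "g = Gcd (insert \<beta>0 (range (\<lambda>i. \<alpha>0 $ i)))"
  have "g \<noteq> 0" using assms by (auto simp: g_def vec_eq_iff)
  then have g_pos: "g > 0" by (simp add: g_def order_le_neq_trans)
  have g_dvd: "g dvd \<beta>0" "g dvd \<alpha>0 $ i" for i
    unfolding g_def by (rule Gcd_dvd; simp)+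
  define \<alpha> where "\<alpha> = (\<chi> i. \<alpha>0 $ i div g)"
  define \<beta> where "\<beta> = \<beta>0 div g"
  have \<alpha>: "\<alpha>0 = g *s \<alpha>" and \<beta>: "\<beta>0 = g * \<beta>"
    using g_dvd by (simp_all add: \<alpha>_def \<beta>_def vec_eq_iff)
  have "insert \<beta>0 (range (\<lambda>i. \<alpha>0 $ i)) = (*) g ` insert \<beta> (range (\<lambda>i. \<alpha> $ i))"
    by (simp add: \<alpha> \<beta> image_image)
  then have "g = normalize (g * Gcd (insert \<beta> (range (\<lambda>i. \<alpha> $ i))))"
    by (metis g_def Gcd_mult)
  then have "g = g * Gcd (insert \<beta> (range (\<lambda>i. \<alpha> $ i)))"
    using g_pos by (simp add: abs_mult)
  then have "primitive \<alpha> \<beta>" using g_pos by (simp add: primitive_def)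
  with g_pos \<alpha> \<beta> show thesis by (rule that)
qed

lemma rational_halfspace_primitive:
  fixes c :: "real^'n" and r :: real
  assumes c: "\<forall>i. c $ i \<in> \<rat>" and r: "r \<in> \<rat>" and "c \<noteq> 0"
  obtains \<alpha> \<beta> where "primitive \<alpha> \<beta>" "halfsp \<alpha> \<beta> = {x. r \<le> c \<bullet> x}" "hyp \<alpha> \<beta> = {x. c \<bullet> x = r}"
proof -
  obtain N :: int where N: "N > 0" "\<forall>q\<in>insert r (range (($) c)). of_int N * q \<in> \<int>"
    using common_denominator[of "insert r (range (($) c))"] c r by auto
  have floor_Ints: "of_int \<lfloor>x\<rfloor> = x" if "x \<in> \<int>" for x :: real
    using that by (auto elim: Ints_cases)
  define \<alpha>0 where "\<alpha>0 = (\<chi> i. \<lfloor>of_int N * c $ i\<rfloor>)"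
  have \<alpha>0: "ivec \<alpha>0 = of_int N *\<^sub>R c"
    using N(2) by (simp add: ivec_def \<alpha>0_def vec_eq_iff floor_Ints)
  have \<beta>0: "of_int \<lfloor>of_int N * r\<rfloor> = of_int N * r"
    using N(2) by (simp add: floor_Ints)
  have "\<alpha>0 \<noteq> 0"
  proof
    assume "\<alpha>0 = 0"
    then have "of_int N *\<^sub>R c = 0" using \<alpha>0 by (simp add: ivec_def vec_eq_iff)
    with N(1) \<open>c \<noteq> 0\<close> show False by simp
  qed
  then obtain \<alpha> \<beta> and g :: int
    where g: "g > 0" "\<alpha>0 = g *s \<alpha>" "\<lfloor>of_int N * r\<rfloor> = g * \<beta>" and prim: "primitive \<alpha> \<beta>"
    by (rule primitive_part_exists)
  define m :: real where "m = of_int N / of_int g"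
  have m: "m > 0" using N(1) g(1) by (simp add: m_def)
  have "of_int g *\<^sub>R ivec \<alpha> = of_int N *\<^sub>R c"
    using \<alpha>0 g(2) by (simp add: ivec_def vec_eq_iff)
  then have \<alpha>: "ivec \<alpha> = m *\<^sub>R c"
    using g(1) by (simp add: m_def vec_eq_iff field_simps)
  have "of_int g * of_int \<beta> = of_int N * r"
    using \<beta>0 g(3) by (metis of_int_mult)
  then have \<beta>: "of_int \<beta> = m * r"
    using g(1) by (simp add: m_def field_simps)
  have "halfsp \<alpha> \<beta> = {x. r \<le> c \<bullet> x}" "hyp \<alpha> \<beta> = {x. c \<bullet> x = r}"
    using m by (auto simp: halfsp_def hyp_def ipair_def \<alpha> \<beta>)
  with prim show thesis by (rule that)
qed

lemma rational_normal_exists: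
  fixes B :: "(real^'n) set" and a :: "real^'n"
  assumes indep: "independent B" and card_B: "card B = CARD('n) - 1"
    and rat: "\<forall>w\<in>B. \<forall>i. w $ i \<in> \<rat>" and "a \<noteq> 0" and orth: "\<forall>w\<in>B. a \<bullet> w = 0"
  obtains c \<mu> where "\<forall>i. c $ i \<in> \<rat>" "\<mu> \<noteq> 0" "c = \<mu> *\<^sub>R a"
proof -
  obtain j0 :: 'n where True by blast
  have "finite B" using indep finiteI_independent by blast
  moreover have "card (UNIV - {j0}) = card B" by (simp add: card_B card_Diff_singleton)
  ultimately obtain g where g: "bij_betw g (UNIV - {j0}) B"
    using finite_same_card_bij[of "UNIV - {j0}" B] by auto
  define M where "M x = ((\<chi> i. if i = j0 then x else g i) :: real^'n^'n)" for x
  \<comment> \<open>the cofactors along row \<open>j0\<close>: a generalized cross product of \<open>B\<close>, rational because \<open>B\<close> is\<close>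
  define c where "c = (\<chi> k. det (M (axis k 1)))"
  have det_M: "det (M x) = c \<bullet> x" for x
  proof -
    have "M x = (\<chi> i. if i = j0 then (\<Sum>k\<in>UNIV. x$k *s axis k 1) else g i)"
      unfolding M_def basis_expansion ..
    then have "det (M x) = (\<Sum>k\<in>UNIV. det ((\<chi> i. if i = j0 then x$k *s axis k 1 else g i)::real^'n^'n))"
      using det_linear_row_sum[where S=UNIV and k=j0 and a="\<lambda>i k. x$k *s axis k 1" and c=g] by simp
    also have "\<dots> = (\<Sum>k\<in>UNIV. x$k * c$k)"
      by (rule sum.cong) (auto simp: det_row_mul c_def M_def)
    finally show ?thesis by (simp add: inner_vec_def mult.commute)
  qed
  have g_B: "g i \<in> B" if "i \<noteq> j0" for i
    using g that by (auto simp: bij_betw_def)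
  have "(M (axis k 1)) $ i $ j \<in> \<rat>" for k i j
    using rat g_B by (cases "i = j0") (auto simp: M_def axis_def)
  then have rat_c: "\<forall>k. c $ k \<in> \<rat>"
    unfolding c_def det_def vec_lambda_beta by (simp add: Rats_sum Rats_mult Rats_prod)
  have c_B: "c \<bullet> w = 0" if w: "w \<in> B" for w
  proof -
    obtain i where i: "i \<noteq> j0" "g i = w"
      using g w by (auto simp: bij_betw_def)
    have "det (M w) = 0"
      by (rule det_identical_rows[of i j0]) (use i in \<open>auto simp: row_def M_def\<close>)
    then show ?thesis using det_M by simp
  qed
  have "span B \<subseteq> {x. a \<bullet> x = 0}"
    using orth by (intro span_minimal subspace_hyperplane) auto
  then have "a \<notin> span B" using \<open>a \<noteq> 0\<close> by auto
  then have indep_aB: "independent (insert a B)" and "a \<notin> B"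
    using indep by (auto simp: independent_insertI intro: span_base)
  then have card_aB: "card (insert a B) = CARD('n)"
    using card_B \<open>finite B\<close> by simp
  have "rows (M a) = insert a B"
    using g by (auto simp: rows_def row_def M_def bij_betw_def vec_eq_iff)
  then have "rank (M a) = CARD('n)"
    using card_aB indep_aB by (simp add: row_rank_def dim_eq_card_independent)
  then have ca: "c \<bullet> a \<noteq> 0"
    using det_M det_eq_0_rank[of "M a"] by simp
  have "span (insert a B) = UNIV"
    using card_aB indep_aB dim_eq_full[of "insert a B"] by (simp add: dim_eq_card_independent)
  define \<mu> where "\<mu> = (c \<bullet> a) / (a \<bullet> a)"
  define y where "y = c - \<mu> *\<^sub>R a"
  have "orthogonal y z" if "z \<in> insert a B" for z
    using that \<open>a \<noteq> 0\<close> c_B orth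
    by (auto simp: orthogonal_def y_def \<mu>_def inner_diff_left)
  then have "orthogonal y y"
    using orthogonal_to_span \<open>span (insert a B) = UNIV\<close> by blast
  then have "c = \<mu> *\<^sub>R a" by (simp add: orthogonal_def y_def)
  moreover have "\<mu> \<noteq> 0" using ca \<open>a \<noteq> 0\<close> by (simp add: \<mu>_def)
  ultimately show thesis using rat_c that by blast
qed

lemma rational_polytope_facet_primitive:
  fixes P :: "(real^'n) set" and a :: "real^'n"
  assumes rp: "rational_polytope P" and "a \<noteq> 0" and facet: "(P \<inter> {x. a \<bullet> x = b}) facet_of P"
  obtains \<alpha> \<beta> where "primitive \<alpha> \<beta>" "halfsp \<alpha> \<beta> = {x. a \<bullet> x \<le> b}" "hyp \<alpha> \<beta> = {x. a \<bullet> x = b}"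
proof -
  obtain V where V: "finite V" "\<forall>v\<in>V. \<forall>i. v $ i \<in> \<rat>" "P = convex hull V"
    and dim_P: "aff_dim P = int CARD('n)"
    using rp unfolding rational_polytope_def by blast
  have "(P \<inter> {x. a \<bullet> x = b}) face_of convex hull V"
    using facet V(3) facet_of_imp_face_of by metis
  then obtain T where T: "T \<subseteq> V" "P \<inter> {x. a \<bullet> x = b} = convex hull T"
    using face_of_convex_hull_subset[OF finite_imp_compact[OF V(1)]] by blast
  have dim_T: "aff_dim T = int CARD('n) - 1"
  proof -
    have "aff_dim (convex hull T) = aff_dim P - 1"
      using facet T(2) unfolding facet_of_def by metis
    then show ?thesis by (simp add: aff_dim_convex_hull dim_P)
  qed
  have "CARD('n) \<ge> 1" by (simp add: Suc_leI)
  then have "T \<noteq> {}"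
    using dim_T by (intro notI) simp
  then obtain t0 where t0: "t0 \<in> T" by blast
  define D where "D = (+) (- t0) ` T"
  have "aff_dim T = int (dim D)"
    unfolding D_def by (rule aff_dim_eq_dim) (simp add: hull_inc t0)
  then have dim_D: "dim D = CARD('n) - 1"
    using dim_T \<open>CARD('n) \<ge> 1\<close> by linarith
  obtain Bs where Bs: "Bs \<subseteq> D" "independent Bs" "card Bs = dim D"
    by (meson basis_exists)
  have T_hyp: "a \<bullet> t = b" if "t \<in> T" for t
    using that T(2) hull_subset[of T convex] by blast
  have rat_T: "\<forall>i. t $ i \<in> \<rat>" if "t \<in> T" for t
    using that T(1) V(2) by blast
  have Bs_rat_orth: "(\<forall>i. w $ i \<in> \<rat>) \<and> a \<bullet> w = 0" if w: "w \<in> Bs" for w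
  proof -
    obtain t where t: "t \<in> T" "w = - t0 + t" using w Bs(1) D_def by blast
    then show ?thesis
      using rat_T[OF t(1)] rat_T[OF t0] T_hyp[OF t(1)] T_hyp[OF t0] by (simp add: inner_diff_right)
  qed
  have "card Bs = CARD('n) - 1" using Bs(3) dim_D by simp
  then obtain c \<mu> where c: "\<forall>i. c $ i \<in> \<rat>" "\<mu> \<noteq> 0" "c = \<mu> *\<^sub>R a"
    using rational_normal_exists[OF Bs(2) _ _ \<open>a \<noteq> 0\<close>] Bs_rat_orth by blast
  define s where "s = (if \<mu> < 0 then c else - c)"
  define \<nu> where "\<nu> = - \<bar>\<mu>\<bar>"
  have s: "s = \<nu> *\<^sub>R a" and "\<nu> < 0"
    using c(2,3) by (auto simp: s_def \<nu>_def)
  have rat_s: "\<forall>i. s $ i \<in> \<rat>" using c(1) by (simp add: s_def)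
  have "s \<bullet> t0 \<in> \<rat>"
    using rat_s rat_T[OF t0] by (simp add: inner_vec_def Rats_sum)
  moreover have "s \<noteq> 0" using s \<open>\<nu> < 0\<close> \<open>a \<noteq> 0\<close> by simp
  ultimately obtain \<alpha> \<beta> where "primitive \<alpha> \<beta>"
      "halfsp \<alpha> \<beta> = {x. s \<bullet> t0 \<le> s \<bullet> x}" "hyp \<alpha> \<beta> = {x. s \<bullet> x = s \<bullet> t0}"
    using rational_halfspace_primitive[OF rat_s] by blast
  moreover have "{x. s \<bullet> t0 \<le> s \<bullet> x} = {x. a \<bullet> x \<le> b}" "{x. s \<bullet> x = s \<bullet> t0} = {x. a \<bullet> x = b}"
    using s \<open>\<nu> < 0\<close> T_hyp[OF t0] by (auto simp: mult_le_cancel_left_neg)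
  ultimately show thesis using that by simp
qed

lemma rational_polytope_eq_Inter_facet_halfsp:
  fixes P :: "(real^'n) set"
  assumes rp: "rational_polytope P"
  shows "P = \<Inter>{halfsp \<alpha> \<beta> | \<alpha> \<beta>. primitive \<alpha> \<beta> \<and> P \<subseteq> halfsp \<alpha> \<beta> \<and> (P \<inter> hyp \<alpha> \<beta>) facet_of P}"
    (is "P = \<Inter>?H")
proof
  show "P \<subseteq> \<Inter>?H" by blast
next
  obtain V where "finite V" "P = convex hull V" and dim_P: "aff_dim P = int CARD('n)"
    using rp unfolding rational_polytope_def by blast
  then have "polyhedron P" using polytope_imp_polyhedron polytope_def by blast
  then obtain F where F: "finite F" "P = affine hull P \<inter> \<Inter>F"
      "\<forall>h\<in>F. \<exists>a b. a \<noteq> 0 \<and> h = {x. a \<bullet> x \<le> b}"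
      "\<forall>F'. F' \<subset> F \<longrightarrow> P \<subset> affine hull P \<inter> \<Inter>F'"
    unfolding polyhedron_Int_affine_minimal by blast
  obtain a b where ab: "\<forall>h\<in>F. a h \<noteq> 0 \<and> h = {x. a h \<bullet> x \<le> b h}"
    using F(3) by metis
  have F_H: "h \<in> ?H" if h: "h \<in> F" for h
  proof -
    have facet: "(P \<inter> {x. a h \<bullet> x = b h}) facet_of P"
      using facet_of_polyhedron_explicit[OF F(1) F(2), of a b] ab F(4) h by blast
    obtain \<alpha> \<beta> where \<alpha>\<beta>: "primitive \<alpha> \<beta>" "halfsp \<alpha> \<beta> = h" "hyp \<alpha> \<beta> = {x. a h \<bullet> x = b h}"
      using rational_polytope_facet_primitive[OF rp _ facet] ab h by metis
    moreover have "P \<subseteq> halfsp \<alpha> \<beta>" using F(2) h \<alpha>\<beta>(2) by blast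
    moreover have "(P \<inter> hyp \<alpha> \<beta>) facet_of P" using facet \<alpha>\<beta>(3) by simp
    ultimately show ?thesis by blast
  qed
  have "affine hull P = UNIV" using dim_P aff_dim_eq_full[of P] by simp
  then have "P = \<Inter>F" using F(2) by simp
  then show "\<Inter>?H \<subseteq> P" using F_H by blast
qed

lemma ipair_ivec: "ipair \<alpha> (ivec z) = of_int (\<Sum>i\<in>UNIV. \<alpha> $ i * z $ i)"
  by (simp add: ipair_def ivec_def inner_vec_def)

lemma same_piece_ipair:
  assumes "A \<in> pieces \<alpha>" "x \<in> A" "y \<in> A"
  shows same_piece_ceiling: "\<lceil>ipair \<alpha> x\<rceil> = \<lceil>ipair \<alpha> y\<rceil>"
    and same_piece_Ints: "ipair \<alpha> x \<in> \<int> \<Longrightarrow> ipair \<alpha> y = ipair \<alpha> x"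
proof -
  from assms(1) consider k where "A = hyp \<alpha> k"
    | k where "A = {x. of_int k < ipair \<alpha> x \<and> ipair \<alpha> x < of_int k + 1}"
    unfolding pieces_def by blast
  then have "\<lceil>ipair \<alpha> x\<rceil> = \<lceil>ipair \<alpha> y\<rceil> \<and> (ipair \<alpha> x \<in> \<int> \<longrightarrow> ipair \<alpha> y = ipair \<alpha> x)"
  proof cases
    case 1
    then show ?thesis using assms by (simp add: hyp_def)
  next
    case (2 k)
    have strip: "\<lceil>z\<rceil> = k + 1 \<and> z \<notin> \<int>" if "of_int k < z" "z < of_int k + 1" for z :: real
    proof
      show "\<lceil>z\<rceil> = k + 1" using that by (simp add: ceiling_eq_iff)
      show "z \<notin> \<int>"
      proof
        assume "z \<in> \<int>"
        then obtain n where "z = of_int n" by (rule Ints_cases)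
        with that show False by simp
      qed
    qed
    show ?thesis using assms 2 strip by auto
  qed
  then show "\<lceil>ipair \<alpha> x\<rceil> = \<lceil>ipair \<alpha> y\<rceil>" "ipair \<alpha> x \<in> \<int> \<Longrightarrow> ipair \<alpha> y = ipair \<alpha> x"
    by blast+
qed

lemma scaled_lattice_point_mem_halfsp_iff:
  assumes "t > 0"
  shows "(1 / real t) *\<^sub>R (ivec z - x) \<in> halfsp \<alpha> \<beta> \<longleftrightarrow>
    int t * \<beta> + \<lceil>ipair \<alpha> x\<rceil> \<le> (\<Sum>i\<in>UNIV. \<alpha> $ i * z $ i)"
proof -
  have "(1 / real t) *\<^sub>R (ivec z - x) \<in> halfsp \<alpha> \<beta> \<longleftrightarrow>
      real t * of_int \<beta> \<le> ipair \<alpha> (ivec z) - ipair \<alpha> x"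
    using assms by (simp add: halfsp_def ipair_def inner_diff_right pos_le_divide_eq mult.commute)
  also have "\<dots> \<longleftrightarrow> ipair \<alpha> x \<le> of_int ((\<Sum>i\<in>UNIV. \<alpha> $ i * z $ i) - int t * \<beta>)"
    unfolding ipair_ivec of_int_diff of_int_mult of_int_of_nat_eq by linarith
  also have "\<dots> \<longleftrightarrow> \<lceil>ipair \<alpha> x\<rceil> \<le> (\<Sum>i\<in>UNIV. \<alpha> $ i * z $ i) - int t * \<beta>"
    by (rule ceiling_le_iff[symmetric])
  also have "\<dots> \<longleftrightarrow> int t * \<beta> + \<lceil>ipair \<alpha> x\<rceil> \<le> (\<Sum>i\<in>UNIV. \<alpha> $ i * z $ i)"
    by linarith
  finally show ?thesis .
qed

lemma lattice_point_mem_dilate_iff: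
  fixes P :: "(real^'n) set"
  assumes rp: "rational_polytope P" and "t > 0"
  shows "ivec z \<in> (\<lambda>p. real t *\<^sub>R p + x) ` P \<longleftrightarrow>
    (\<forall>\<alpha> \<beta>. primitive \<alpha> \<beta> \<and> P \<subseteq> halfsp \<alpha> \<beta> \<and> (P \<inter> hyp \<alpha> \<beta>) facet_of P \<longrightarrow>
       int t * \<beta> + \<lceil>ipair \<alpha> x\<rceil> \<le> (\<Sum>i\<in>UNIV. \<alpha> $ i * z $ i))"
proof -
  have "ivec z \<in> (\<lambda>p. real t *\<^sub>R p + x) ` P \<longleftrightarrow> (1 / real t) *\<^sub>R (ivec z - x) \<in> P"
  proof
    assume "ivec z \<in> (\<lambda>p. real t *\<^sub>R p + x) ` P"
    then show "(1 / real t) *\<^sub>R (ivec z - x) \<in> P" using \<open>t > 0\<close> by auto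
  next
    assume "(1 / real t) *\<^sub>R (ivec z - x) \<in> P"
    moreover have "ivec z = real t *\<^sub>R ((1 / real t) *\<^sub>R (ivec z - x)) + x" using \<open>t > 0\<close> by simp
    ultimately show "ivec z \<in> (\<lambda>p. real t *\<^sub>R p + x) ` P" by blast
  qed
  also have "\<dots> \<longleftrightarrow> (\<forall>\<alpha> \<beta>. primitive \<alpha> \<beta> \<and> P \<subseteq> halfsp \<alpha> \<beta> \<and> (P \<inter> hyp \<alpha> \<beta>) facet_of P \<longrightarrow>
      (1 / real t) *\<^sub>R (ivec z - x) \<in> halfsp \<alpha> \<beta>)"
    by (subst rational_polytope_eq_Inter_facet_halfsp[OF rp]) blast
  finally show ?thesis by (simp add: scaled_lattice_point_mem_halfsp_iff[OF \<open>t > 0\<close>])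
qed

lemma eq_if_ipair_normals_eq:
  fixes P :: "(real^'n) set"
  assumes rp: "rational_polytope P" and eq: "\<forall>\<alpha>\<in>normals P. ipair \<alpha> x = ipair \<alpha> y"
  shows "x = y"
proof (rule ccontr)
  assume "x \<noteq> y"
  obtain V where V: "finite V" "P = convex hull V" and dim_P: "aff_dim P = int CARD('n)"
    using rp unfolding rational_polytope_def by blast
  have "P \<noteq> {}" using dim_P by (intro notI) simp
  then obtain p where p: "p \<in> P" by blast
  have "bounded P" using V by (simp add: compact_imp_bounded finite_imp_compact_convex_hull)
  then obtain R where R: "\<forall>q\<in>P. norm q \<le> R" unfolding bounded_iff by blast
  \<comment> \<open>every facet inequality is constant along the direction y - x\<close>
  have line: "p + s *\<^sub>R (y - x) \<in> P" for s
  proof (subst rational_polytope_eq_Inter_facet_halfsp[OF rp], safe)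
    fix \<alpha> \<beta> assume "primitive \<alpha> \<beta>" "P \<subseteq> halfsp \<alpha> \<beta>" "(P \<inter> hyp \<alpha> \<beta>) facet_of P"
    then have "\<alpha> \<in> normals P" and "p \<in> halfsp \<alpha> \<beta>" using p unfolding normals_def by blast+
    then show "p + s *\<^sub>R (y - x) \<in> halfsp \<alpha> \<beta>"
      using eq by (simp add: halfsp_def ipair_def inner_add_right inner_diff_right)
  qed
  have "R \<ge> 0" using R p norm_ge_zero order_trans by blast
  define s where "s = (R + norm p + 1) / norm (y - x)"
  have "norm (s *\<^sub>R (y - x)) = R + norm p + 1"
    using \<open>x \<noteq> y\<close> \<open>R \<ge> 0\<close> by (simp add: s_def)
  moreover have "norm (s *\<^sub>R (y - x)) \<le> norm (p + s *\<^sub>R (y - x)) + norm p"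
    using norm_triangle_ineq4[of "p + s *\<^sub>R (y - x)" p] by simp
  moreover have "norm (p + s *\<^sub>R (y - x)) \<le> R" using R line by blast
  ultimately show False by linarith
qed

lemma lattice_points_dilate_eq_if_same_cell:
  fixes P :: "(real^'n) set"
  assumes rp: "rational_polytope P" and same: "\<forall>\<alpha>\<in>normals P. \<exists>A\<in>pieces \<alpha>. x \<in> A \<and> y \<in> A"
  shows "{z. ivec z \<in> (\<lambda>p. real t *\<^sub>R p + x) ` P} = {z. ivec z \<in> (\<lambda>p. real t *\<^sub>R p + y) ` P}"
proof (cases "t = 0")
  case True
  have "x = y" if "ivec z = x \<or> ivec z = y" for z
  proof (rule eq_if_ipair_normals_eq[OF rp], intro ballI)
    fix \<alpha> assume "\<alpha> \<in> normals P"
    with same obtain A where "A \<in> pieces \<alpha>" "x \<in> A" "y \<in> A" by blast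
    then show "ipair \<alpha> x = ipair \<alpha> y"
      using that same_piece_Ints[of A \<alpha>] by (metis Ints_of_int ipair_ivec)
  qed
  then show ?thesis using True by auto
next
  case False
  then have "t > 0" by simp
  have ceil: "\<lceil>ipair \<alpha> x\<rceil> = \<lceil>ipair \<alpha> y\<rceil>" if "primitive \<alpha> \<beta>" "P \<subseteq> halfsp \<alpha> \<beta>" "(P \<inter> hyp \<alpha> \<beta>) facet_of P"
    for \<alpha> \<beta>
    using that same same_piece_ceiling unfolding normals_def by blast
  show ?thesis
    unfolding lattice_point_mem_dilate_iff[OF rp \<open>t > 0\<close>]
    by (intro Collect_cong all_cong1 imp_cong refl) (metis ceil)
qed

lemma TL_translate_lattice: "TL P (v + ivec w) t = TL P v t"
proof -
  have "{z. ivec z \<in> (\<lambda>x. real t *\<^sub>R x + (v + ivec w)) ` P} =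
      (\<lambda>z. z + w) ` {z. ivec z \<in> (\<lambda>x. real t *\<^sub>R x + v) ` P}"
  proof (rule set_eqI, rule iffI)
    fix z assume "z \<in> {z. ivec z \<in> (\<lambda>x. real t *\<^sub>R x + (v + ivec w)) ` P}"
    then have "ivec (z - w) \<in> (\<lambda>x. real t *\<^sub>R x + v) ` P"
      by (auto simp: ivec_def vec_eq_iff image_iff)
    then show "z \<in> (\<lambda>z. z + w) ` {z. ivec z \<in> (\<lambda>x. real t *\<^sub>R x + v) ` P}"
      by (intro rev_image_eqI[of "z - w"]) auto
  next
    fix z assume "z \<in> (\<lambda>z. z + w) ` {z. ivec z \<in> (\<lambda>x. real t *\<^sub>R x + v) ` P}"
    then show "z \<in> {z. ivec z \<in> (\<lambda>x. real t *\<^sub>R x + (v + ivec w)) ` P}"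
      by (auto simp: ivec_def vec_eq_iff image_iff)
  qed
  then show ?thesis unfolding TL_def by (simp add: card_image inj_on_def)
qed

theorem theorem1p2:
  fixes P :: "(real^'n) set" and u v :: "real^'n"
  assumes "rational_polytope P"
    and "\<exists>w :: int^'n. \<exists>C\<in>open_cells P. u \<in> C \<and> v + ivec w \<in> C"
  shows "\<forall>t::nat. TL P u t = TL P v t"
proof
  fix t :: nat
  obtain w C where C: "C \<in> open_cells P" "u \<in> C" "v + ivec w \<in> C" using assms(2) by blast
  then obtain A where "\<forall>\<alpha>\<in>normals P. A \<alpha> \<in> pieces \<alpha>" "C = (\<Inter>\<alpha>\<in>normals P. A \<alpha>)"
    unfolding open_cells_def by blast
  then have "\<forall>\<alpha>\<in>normals P. \<exists>A\<in>pieces \<alpha>. u \<in> A \<and> v + ivec w \<in> A"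
    using C by blast
  then have "TL P u t = TL P (v + ivec w) t"
    unfolding TL_def by (simp add: lattice_points_dilate_eq_if_same_cell[OF assms(1)])
  also have "\<dots> = TL P v t" by (rule TL_translate_lattice)
  finally show "TL P u t = TL P v t" .
qed

end
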